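(* Let $\mathcal M=(V,E,c_V,L,\Theta)$ be a molecular graph with $V=\{v_1,\dots,v_n\}$, and suppose there exists $(v,w_1,w_2)\in E_2$ with $\Theta(v,w_1,w_2)\neq\pi$. Let $SO(3)$ act on $\mathcal C^P_{\mathcal M}$ by $A\cdot\varphi=A\circ\varphi$, let $\mathcal C^{int}_{\mathcal M}=\mathcal C^P_{\mathcal M}/SO(3)$ carry the quotient topology, and let $q:\mathcal C^P_{\mathcal M}\to\mathcal C^{int}_{\mathcal M}$ be the quotient map. Then $q$ is a principal $SO(3)$-bundle, and this bundle is trivial: there is an $SO(3)$-equivariant homeomorphism $\mathcal C^P_{\mathcal M}\cong \mathcal C^{int}_{\mathcal M}\times SO(3)$ commuting with the projections to $\mathcal C^{int}_{\mathcal M}$ (equivalently, $q$ admits a continuous section).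
   Context: A molecular graph is a tuple $\mathcal M=(V,E,c_V,L,\Theta)$ where: $V$ is a finite set; $E\subseteq V\times V$ satisfies $(v,v)\notin E$ and $(v,w)\in E\iff (w,v)\in E$; $c_V:V\to\mathbb N$ (the atomic number of the atom at each vertex); $L:E\to(0,\infty)$ with $L(v,w)=L(w,v)$; and $\Theta:E_2\to(0,\pi]$ with $\Theta(v,w_1,w_2)=\Theta(v,w_2,w_1)$, where $E_2=\{(v,w_1,w_2)\in V^3: (v,w_1),(v,w_2)\in E,\ w_1\neq w_2\}$. The geometric realisation of $\mathcal M$ is the metric graph obtained by gluing a segment $[0,L(e)]$ for each edge $e$ along the vertices. A configuration of $\mathcal M$ is an injective continuous map $\varphi$ from the geometric realisation into $\mathbb R^3$ such that (i) the restriction of $\varphi$ to each edge is an isometric embedding, and (ii) for each $(v,w_1,w_2)\in E_2$ the angle at $\varphi(v)$ between the segments to $\varphi(w_1)$ and $\varphi(w_2)$ equals $\Theta(v,w_1,w_2)$. A configuration is identified with $(\varphi(v_1),\dots,\varphi(v_n))\in\mathbb R^{3n}$. Define $\mathcal C^P_{\mathcal M}$ as the set of configurations satisfying $\sum_{i=1}^n c_V(v_i)\varphi(v_i)=0$, with the subspace topology from $\mathbb R^{3n}$. A principal $SO(3)$-bundle here means: $SO(3)$ acts continuously on the total space, the base is the orbit space with the quotient map as projection, the map $(x,g)\mapsto(x,g\cdot x)$ is a homeomorphism onto its image, and the projection is locally trivial by $SO(3)$-equivariant trivialisations. *)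

theory Defs
  imports "HOL-Analysis.Analysis"
begin

text \<open>Molecular graph with vertex set V = UNIV of a finite type 'v.
  E: directed-pair encoding of the symmetric edge relation,
  c: atomic numbers, L: bond lengths, Th: bond angles.\<close>

definition E2 :: "('v \<times> 'v) set \<Rightarrow> ('v \<times> 'v \<times> 'v) set" where
  "E2 E = {(v, w1, w2). (v, w1) \<in> E \<and> (v, w2) \<in> E \<and> w1 \<noteq> w2}"

definition molecular_graph ::
  "('v \<times> 'v) set \<Rightarrow> ('v \<times> 'v \<Rightarrow> real) \<Rightarrow> ('v \<times> 'v \<times> 'v \<Rightarrow> real) \<Rightarrow> bool" where
  "molecular_graph E L Th \<longleftrightarrow>
     (\<forall>v. (v, v) \<notin> E) \<and>
     (\<forall>v w. (v, w) \<in> E \<longleftrightarrow> (w, v) \<in> E) \<and>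
     (\<forall>(v, w) \<in> E. L (v, w) > 0 \<and> L (v, w) = L (w, v)) \<and>
     (\<forall>(v, w1, w2) \<in> E2 E. 0 < Th (v, w1, w2) \<and> Th (v, w1, w2) \<le> pi
                          \<and> Th (v, w1, w2) = Th (v, w2, w1))"

definition vec_angle :: "real^3 \<Rightarrow> real^3 \<Rightarrow> real" where
  "vec_angle u w = arccos ((u \<bullet> w) / (norm u * norm w))"

text \<open>A configuration: vertex positions x together with the edge maps gamma v w,
  parametrising the segment [0, L(v,w)] of edge (v,w); the segment of (w,v) is the
  same segment traversed backwards (gluing). Conditions: (i) isometric embedding of
  each edge, glued at the vertices; injectivity of the induced map on the geometric
  realisation (vertices, and interior points of edges modulo the reversal
  identification); (ii) the bond angles.\<close>
definition is_configuration ::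
  "('v::finite \<times> 'v) set \<Rightarrow> ('v \<times> 'v \<Rightarrow> real) \<Rightarrow> ('v \<times> 'v \<times> 'v \<Rightarrow> real)
   \<Rightarrow> (real^3)^'v \<Rightarrow> ('v \<Rightarrow> 'v \<Rightarrow> real \<Rightarrow> real^3) \<Rightarrow> bool" where
  "is_configuration E L Th x \<gamma> \<longleftrightarrow>
     (\<forall>(v, w) \<in> E.
        continuous_on {0..L (v, w)} (\<gamma> v w) \<and>
        (\<forall>s \<in> {0..L (v, w)}. \<forall>t \<in> {0..L (v, w)}. dist (\<gamma> v w s) (\<gamma> v w t) = \<bar>s - t\<bar>) \<and>
        \<gamma> v w 0 = x $ v \<and> \<gamma> v w (L (v, w)) = x $ w \<and>
        (\<forall>t \<in> {0..L (v, w)}. \<gamma> w v t = \<gamma> v w (L (v, w) - t))) \<and>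
     inj (\<lambda>v. x $ v) \<and>
     (\<forall>(v, w) \<in> E. \<forall>t \<in> {0<..<L (v, w)}. \<forall>u. \<gamma> v w t \<noteq> x $ u) \<and>
     (\<forall>(v, w) \<in> E. \<forall>(v', w') \<in> E. \<forall>s \<in> {0<..<L (v, w)}. \<forall>t \<in> {0<..<L (v', w')}.
        \<gamma> v w s = \<gamma> v' w' t \<longrightarrow>
          (v = v' \<and> w = w' \<and> s = t) \<or> (v = w' \<and> w = v' \<and> s = L (v', w') - t)) \<and>
     (\<forall>(v, w1, w2) \<in> E2 E.
        vec_angle (x $ w1 - x $ v) (x $ w2 - x $ v) = Th (v, w1, w2))"

definition CP ::
  "('v::finite \<times> 'v) set \<Rightarrow> ('v \<Rightarrow> nat) \<Rightarrow> ('v \<times> 'v \<Rightarrow> real) \<Rightarrow> ('v \<times> 'v \<times> 'v \<Rightarrow> real)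
   \<Rightarrow> ((real^3)^'v) set" where
  "CP E c L Th = {x. (\<exists>\<gamma>. is_configuration E L Th x \<gamma>) \<and>
                     (\<Sum>v\<in>UNIV. real (c v) *\<^sub>R (x $ v)) = 0}"

definition SO3 :: "(real^3^3) set" where
  "SO3 = {A. orthogonal_matrix A \<and> det A = 1}"

definition act :: "real^3^3 \<Rightarrow> (real^3)^'v \<Rightarrow> (real^3)^'v" where
  "act A x = (\<chi> v. A *v (x $ v))"

definition orbit :: "(real^3)^'v \<Rightarrow> ((real^3)^'v) set" where
  "orbit x = {act A x | A. A \<in> SO3}"

definition orbit_space_topology :: "((real^3)^'v) set \<Rightarrow> ((real^3)^'v) set topology" where
  "orbit_space_topology S = topology (\<lambda>U. U \<subseteq> orbit ` S \<and>
      openin (top_of_set S) {x \<in> S. orbit x \<in> U})"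

lemma istopology_orbit_space:
  "istopology (\<lambda>U. U \<subseteq> orbit ` S \<and> openin (top_of_set S) {x \<in> S. orbit x \<in> U})"
  unfolding istopology_def
proof (rule conjI; intro allI impI)
  fix U V assume a: "U \<subseteq> orbit ` S \<and> openin (top_of_set S) {x \<in> S. orbit x \<in> U}"
    "V \<subseteq> orbit ` S \<and> openin (top_of_set S) {x \<in> S. orbit x \<in> V}"
  have "{x \<in> S. orbit x \<in> U \<inter> V} = {x \<in> S. orbit x \<in> U} \<inter> {x \<in> S. orbit x \<in> V}" by auto
  moreover have "openin (top_of_set S) ({x \<in> S. orbit x \<in> U} \<inter> {x \<in> S. orbit x \<in> V})"
    using a by (intro openin_Int) auto
  ultimately show "U \<inter> V \<subseteq> orbit ` S \<and> openin (top_of_set S) {x \<in> S. orbit x \<in> U \<inter> V}"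
    using a by auto
next
  fix K assume a: "\<forall>U\<in>K. U \<subseteq> orbit ` S \<and> openin (top_of_set S) {x \<in> S. orbit x \<in> U}"
  have "{x \<in> S. orbit x \<in> \<Union>K} = (\<Union>U\<in>K. {x \<in> S. orbit x \<in> U})" by auto
  moreover have "openin (top_of_set S) (\<Union>U\<in>K. {x \<in> S. orbit x \<in> U})"
    using a by (intro openin_Union) auto
  ultimately show "\<Union>K \<subseteq> orbit ` S \<and> openin (top_of_set S) {x \<in> S. orbit x \<in> \<Union>K}"
    using a by auto
qed

definition principal_SO3_bundle ::
  "'x topology \<Rightarrow> (real^3^3 \<Rightarrow> 'x \<Rightarrow> 'x) \<Rightarrow> 'b topology \<Rightarrow> ('x \<Rightarrow> 'b) \<Rightarrow> bool" where
  "principal_SO3_bundle X a B q \<longleftrightarrow>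
     \<comment> \<open>continuous group action\<close>
     (\<forall>A\<in>SO3. \<forall>x\<in>topspace X. a A x \<in> topspace X) \<and>
     (\<forall>x\<in>topspace X. a (mat 1) x = x) \<and>
     (\<forall>A\<in>SO3. \<forall>A'\<in>SO3. \<forall>x\<in>topspace X. a (A ** A') x = a A (a A' x)) \<and>
     continuous_map (prod_topology (top_of_set SO3) X) X (\<lambda>(A, x). a A x) \<and>
     \<comment> \<open>the base is the orbit space, q the quotient map\<close>
     quotient_map X B q \<and>
     (\<forall>x\<in>topspace X. \<forall>y\<in>topspace X. q x = q y \<longleftrightarrow> (\<exists>A\<in>SO3. y = a A x)) \<and>
     \<comment> \<open>(x, g) \<mapsto> (x, g x) is a homeomorphism onto its image\<close>
     homeomorphic_map (prod_topology X (top_of_set SO3))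
        (subtopology (prod_topology X X) ((\<lambda>(x, A). (x, a A x)) ` (topspace X \<times> SO3)))
        (\<lambda>(x, A). (x, a A x)) \<and>
     \<comment> \<open>local triviality by equivariant trivialisations\<close>
     (\<forall>b\<in>topspace B. \<exists>U. openin B U \<and> b \<in> U \<and>
        (\<exists>h. homeomorphic_map (subtopology X {x \<in> topspace X. q x \<in> U})
                 (prod_topology (subtopology B U) (top_of_set SO3)) h \<and>
             (\<forall>x \<in> topspace X. q x \<in> U \<longrightarrow>
                 fst (h x) = q x \<and> (\<forall>A\<in>SO3. h (a A x) = (q x, A ** snd (h x))))))"

definition trivial_SO3_bundle ::
  "'x topology \<Rightarrow> (real^3^3 \<Rightarrow> 'x \<Rightarrow> 'x) \<Rightarrow> 'b topology \<Rightarrow> ('x \<Rightarrow> 'b) \<Rightarrow> bool" where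
  "trivial_SO3_bundle X a B q \<longleftrightarrow>
     (\<exists>h. homeomorphic_map X (prod_topology B (top_of_set SO3)) h \<and>
          (\<forall>x \<in> topspace X. fst (h x) = q x \<and> (\<forall>A\<in>SO3. h (a A x) = (q x, A ** snd (h x)))))"

end

theory Submission
  imports Defs
begin

text \<open>A bond angle different from \<open>\<pi>\<close> (and from \<open>0\<close>, excluded for molecular graphs) at \<open>v\<close> makes
  the bond vectors \<open>x w\<^sub>1 - x v\<close> and \<open>x w\<^sub>2 - x v\<close> linearly independent in every configuration,
  so Gram--Schmidt turns them into a rotation \<open>F x\<close> that depends continuously and equivariantly
  on \<open>x\<close>: \<open>F (A x) = A F x\<close>. Such an equivariant map to the group trivialises the action:
  \<open>x \<mapsto> (orbit x, F x)\<close> is a homeomorphism onto \<open>C\<^sup>i\<^sup>n\<^sup>t \<times> SO(3)\<close> with inverse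
  \<open>(b, A) \<mapsto> A s(b)\<close>, where the section \<open>s\<close> picks the unique point of each orbit with frame
  \<open>1\<close>; \<open>s\<close> is continuous because \<open>s \<circ> orbit\<close> is \<open>x \<mapsto> F(x)\<^sup>T x\<close>.\<close>

lemma orthogonal_matrix_inner:
  assumes "orthogonal_matrix A"
  shows "(A *v x) \<bullet> (A *v y) = x \<bullet> (y :: real^'n)"
proof -
  have "orthogonal_transformation ((*v) A)"
    using assms by (simp add: orthogonal_transformation_matrix)
  then show ?thesis by (simp add: orthogonal_transformation_def)
qed

lemma orthogonal_matrix_norm:
  "orthogonal_matrix A \<Longrightarrow> norm (A *v x) = norm (x :: real^'n)"
  by (simp add: norm_eq_sqrt_inner orthogonal_matrix_inner)

lemma orthogonal_matrix_dist:
  "orthogonal_matrix A \<Longrightarrow> dist (A *v x) (A *v y) = dist x (y :: real^'n)"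
  by (simp add: dist_norm matrix_vector_mult_diff_distrib[symmetric] orthogonal_matrix_norm)

lemma orthogonal_matrix_mult_vector_cancel:
  "orthogonal_matrix A \<Longrightarrow> A *v x = A *v y \<longleftrightarrow> x = (y :: real^'n)"
  by (metis dist_eq_0_iff orthogonal_matrix_dist)

lemma sgn_orthogonal_matrix:
  "orthogonal_matrix A \<Longrightarrow> sgn (A *v x) = A *v sgn (x :: real^'n)"
  by (simp add: sgn_div_norm orthogonal_matrix_norm matrix_vector_mult_scaleR)

lemma vec_angle_orthogonal_matrix:
  "orthogonal_matrix A \<Longrightarrow> vec_angle (A *v x) (A *v y) = vec_angle x y"
  by (simp add: vec_angle_def orthogonal_matrix_norm orthogonal_matrix_inner)

lemma continuous_on_transpose [continuous_intros]:
  "continuous_on S f \<Longrightarrow> continuous_on S (\<lambda>x. transpose (f x :: real^'n^'m))"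
  unfolding transpose_def by (intro continuous_intros)

lemma continuous_on_matrix_mult [continuous_intros]:
  "continuous_on S f \<Longrightarrow> continuous_on S g \<Longrightarrow> continuous_on S (\<lambda>x. f x ** (g x :: real^'n^'m))"
  unfolding matrix_matrix_mult_def by (intro continuous_intros)

lemma continuous_on_matrix_vector_mult [continuous_intros]:
  "continuous_on S f \<Longrightarrow> continuous_on S g \<Longrightarrow> continuous_on S (\<lambda>x. f x *v (g x :: real^'n))"
  unfolding matrix_vector_mult_def by (intro continuous_intros)

lemma continuous_on_vector_3 [continuous_intros]:
  fixes a b c :: "'a::topological_space \<Rightarrow> 'b::{topological_space, zero}"
  assumes "continuous_on S a" "continuous_on S b" "continuous_on S c"
  shows "continuous_on S (\<lambda>x. vector [a x, b x, c x] :: 'b^3)"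
proof -
  have "continuous_on S (\<lambda>x. vector [a x, b x, c x] $ i)" for i :: 3
    using exhaust_3[of i] assms by auto
  then show ?thesis
    by (subst vec_lambda_eta[symmetric]) (rule continuous_on_vec_lambda)
qed

lemma transpose_vector_3_mult:
  fixes A :: "real^3^3"
  shows "transpose (vector [A *v a, A *v b, A *v c]) = A ** transpose (vector [a, b, c])"
  by (simp add: vec_eq_iff transpose_def matrix_matrix_mult_def matrix_vector_mult_def forall_3 vector_def)

lemma SO3_iff_rotation_matrix: "A \<in> SO3 \<longleftrightarrow> rotation_matrix A"
  by (simp add: SO3_def rotation_matrix_def)

lemma transpose_in_SO3: "A \<in> SO3 \<Longrightarrow> transpose A \<in> SO3"
  by (simp add: SO3_def det_transpose)

lemma matrix_mult_in_SO3: "A \<in> SO3 \<Longrightarrow> B \<in> SO3 \<Longrightarrow> A ** B \<in> SO3"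
  by (simp add: SO3_def det_mul orthogonal_matrix_mul)

lemma mat_1_in_SO3: "mat 1 \<in> SO3"
  by (simp add: SO3_def orthogonal_matrix_id)

lemma SO3_transpose_mult: "A \<in> SO3 \<Longrightarrow> transpose A ** A = mat 1"
  by (simp add: SO3_def orthogonal_matrix_def)

lemma SO3_mult_transpose: "A \<in> SO3 \<Longrightarrow> A ** transpose A = mat 1"
  by (simp add: SO3_def orthogonal_matrix_def)

definition orth_component :: "real^3 \<Rightarrow> real^3 \<Rightarrow> real^3" where
  "orth_component u w = w - (w \<bullet> sgn u) *\<^sub>R sgn u"

text \<open>\<open>vector\<close> lists rows, so the frame vectors are the columns of \<open>frame u w\<close>.\<close>

definition frame :: "real^3 \<Rightarrow> real^3 \<Rightarrow> real^3^3" where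
  "frame u w = transpose (vector [sgn u, sgn (orth_component u w), cross3 (sgn u) (sgn (orth_component u w))])"

lemma orth_component_orthogonal_matrix:
  "orthogonal_matrix A \<Longrightarrow> orth_component (A *v u) (A *v w) = A *v orth_component u w"
  by (simp add: orth_component_def sgn_orthogonal_matrix orthogonal_matrix_inner
      matrix_vector_mult_scaleR matrix_vector_mult_diff_distrib)

lemma frame_rotation_matrix:
  assumes "rotation_matrix A"
  shows "frame (A *v u) (A *v w) = A ** frame u w"
proof -
  have "orthogonal_matrix A" using assms by (simp add: rotation_matrix_def)
  then show ?thesis
    by (simp add: frame_def orth_component_orthogonal_matrix sgn_orthogonal_matrix
        cross_rotation_matrix[OF assms] transpose_vector_3_mult)
qed

lemma orth_component_nonzero:
  assumes "cross3 u w \<noteq> 0"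
  shows "orth_component u w \<noteq> 0"
proof
  assume "orth_component u w = 0"
  then have "w = ((w \<bullet> sgn u) / norm u) *\<^sub>R u"
    by (simp add: orth_component_def sgn_div_norm divide_inverse)
  then have "cross3 u w = 0"
    by (metis cross_mult_right cross_refl scaleR_zero_right)
  with assms show False ..
qed

lemma norm_cross3_orthonormal:
  assumes "norm a = 1" "norm b = 1" "a \<bullet> b = 0"
  shows "norm (cross3 a b) = 1"
proof -
  have "(norm (cross3 a b))\<^sup>2 = 1"
    using norm_cross_dot[of a b] assms by simp
  then show ?thesis by (metis norm_ge_zero real_sqrt_one real_sqrt_unique)
qed

lemma rotation_matrix_frame:
  assumes "cross3 u w \<noteq> 0"
  shows "rotation_matrix (frame u w)"
proof -
  define e1 e2 where "e1 = sgn u" and "e2 = sgn (orth_component u w)"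
  have "u \<noteq> 0" using assms by auto
  then have n1: "norm e1 = 1" by (simp add: e1_def norm_sgn)
  have n2: "norm e2 = 1"
    using orth_component_nonzero[OF assms] by (simp add: e2_def norm_sgn)
  have "e1 \<bullet> orth_component u w = 0"
    using n1 by (simp add: e1_def orth_component_def inner_diff_right inner_commute norm_eq_1)
  then have o12: "e1 \<bullet> e2 = 0" by (simp add: e2_def sgn_div_norm)
  have n3: "norm (cross3 e1 e2) = 1" by (rule norm_cross3_orthonormal[OF n1 n2 o12])
  have "orthogonal_matrix (vector [e1, e2, cross3 e1 e2] :: real^3^3)"
    unfolding orthogonal_matrix_orthonormal_rows
    using n1 n2 n3 o12
    by (auto simp: row_def forall_3 orthogonal_def dot_cross_self inner_commute)
  moreover have "det (vector [e1, e2, cross3 e1 e2] :: real^3^3) = 1"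
    using n3 cross_triple[of e1 e2 "cross3 e1 e2"]
    by (simp add: dot_cross_det[symmetric] inner_commute norm_eq_1)
  ultimately show ?thesis
    by (simp add: rotation_matrix_def frame_def e1_def e2_def det_transpose)
qed

lemma continuous_on_frame:
  fixes u w :: "'a::t2_space \<Rightarrow> real^3"
  assumes "continuous_on S u" "continuous_on S w" "\<And>x. x \<in> S \<Longrightarrow> cross3 (u x) (w x) \<noteq> 0"
  shows "continuous_on S (\<lambda>x. frame (u x) (w x))"
proof -
  have "u x \<noteq> 0" "orth_component (u x) (w x) \<noteq> 0" if "x \<in> S" for x
    using assms(3)[OF that] orth_component_nonzero by auto
  then show ?thesis
    unfolding frame_def orth_component_def
    by (intro continuous_intros continuous_on_cross assms) auto
qed

lemma cross3_neq_0_if_vec_angle: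
  assumes "u \<noteq> 0" "w \<noteq> 0" "vec_angle u w \<notin> {0, pi}"
  shows "cross3 u w \<noteq> 0"
proof
  assume "cross3 u w = 0"
  then have "(u \<bullet> w)\<^sup>2 = (norm u * norm w)\<^sup>2"
    using norm_cross_dot[of u w] by simp
  then have "(u \<bullet> w) / (norm u * norm w) \<in> {1, -1}"
    using assms(1,2) by (auto simp: power2_eq_iff)
  then have "vec_angle u w \<in> {arccos 1, arccos (-1)}"
    unfolding vec_angle_def by auto
  with assms(3) show False by simp
qed

lemma act_nth [simp]: "act A x $ v = A *v x $ v"
  by (simp add: act_def)

lemma act_mat_1 [simp]: "act (mat 1) x = x"
  by (simp add: vec_eq_iff)

lemma act_act: "act A (act B x) = act (A ** B) x"
  by (simp add: vec_eq_iff matrix_vector_mul_assoc)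

lemma continuous_on_act [continuous_intros]:
  "continuous_on S f \<Longrightarrow> continuous_on S g \<Longrightarrow> continuous_on S (\<lambda>t. act (f t) (g t :: (real^3)^'v))"
  unfolding act_def by (intro continuous_intros)

lemma continuous_map_act:
  assumes "\<And>A x. A \<in> SO3 \<Longrightarrow> x \<in> S \<Longrightarrow> act A x \<in> S"
  shows "continuous_map (prod_topology (top_of_set SO3) (top_of_set S)) (top_of_set S) (\<lambda>(A, x). act A x)"
proof -
  have "continuous_on (SO3 \<times> S) (\<lambda>p. act (fst p) (snd p))"
    by (intro continuous_intros)
  then show ?thesis
    using assms by (auto simp: continuous_map_in_subtopology case_prod_beta')
qed

lemma orbit_act:
  assumes "A \<in> SO3"
  shows "orbit (act A x) = orbit x"
proof
  show "orbit (act A x) \<subseteq> orbit x"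
    using assms by (auto simp: orbit_def act_act intro: matrix_mult_in_SO3)
  show "orbit x \<subseteq> orbit (act A x)"
  proof
    fix y assume "y \<in> orbit x"
    then obtain B where B: "B \<in> SO3" "y = act B x" by (auto simp: orbit_def)
    then have "y = act (B ** transpose A) (act A x)"
      using assms by (simp add: act_act matrix_mul_assoc[symmetric] SO3_transpose_mult)
    then show "y \<in> orbit (act A x)"
      using assms B by (auto simp: orbit_def intro!: matrix_mult_in_SO3 transpose_in_SO3)
  qed
qed

lemma orbit_eq_iff: "orbit x = orbit y \<longleftrightarrow> (\<exists>A\<in>SO3. y = act A x)"
proof
  assume "orbit x = orbit y"
  moreover have "y \<in> orbit y" using mat_1_in_SO3 by (force simp: orbit_def)
  ultimately show "\<exists>A\<in>SO3. y = act A x" by (auto simp: orbit_def)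
qed (auto simp: orbit_act)

lemma openin_orbit_space_topology:
  "openin (orbit_space_topology S) U \<longleftrightarrow>
     U \<subseteq> orbit ` S \<and> openin (top_of_set S) {x \<in> S. orbit x \<in> U}"
  by (simp add: orbit_space_topology_def istopology_orbit_space)

lemma topspace_orbit_space_topology: "topspace (orbit_space_topology S) = orbit ` S"
proof -
  have "{x \<in> S. orbit x \<in> orbit ` S} = S" by auto
  then have "openin (orbit_space_topology S) (orbit ` S)"
    by (simp add: openin_orbit_space_topology)
  then show ?thesis
    by (auto dest: openin_subset simp: topspace_def openin_orbit_space_topology)
qed

lemma quotient_map_orbit: "quotient_map (top_of_set S) (orbit_space_topology S) orbit"
  by (auto simp: quotient_map_def topspace_orbit_space_topology openin_orbit_space_topology)

locale equivariant_frame =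
  fixes S :: "((real^3)^'v) set" and F :: "(real^3)^'v \<Rightarrow> real^3^3"
  assumes act_closed: "\<And>A x. A \<in> SO3 \<Longrightarrow> x \<in> S \<Longrightarrow> act A x \<in> S"
    and continuous_frame: "continuous_on S F"
    and frame_in_SO3: "\<And>x. x \<in> S \<Longrightarrow> F x \<in> SO3"
    and frame_act: "\<And>A x. A \<in> SO3 \<Longrightarrow> x \<in> S \<Longrightarrow> F (act A x) = A ** F x"
begin

definition normal_form :: "(real^3)^'v \<Rightarrow> (real^3)^'v" where
  "normal_form x = act (transpose (F x)) x"

lemma normal_form_in: "x \<in> S \<Longrightarrow> normal_form x \<in> S"
  by (simp add: normal_form_def act_closed frame_in_SO3 transpose_in_SO3)

lemma orbit_normal_form: "x \<in> S \<Longrightarrow> orbit (normal_form x) = orbit x"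
  by (simp add: normal_form_def orbit_act frame_in_SO3 transpose_in_SO3)

lemma frame_normal_form: "x \<in> S \<Longrightarrow> F (normal_form x) = mat 1"
  by (simp add: normal_form_def frame_act frame_in_SO3 transpose_in_SO3 SO3_transpose_mult)

lemma act_frame_normal_form: "x \<in> S \<Longrightarrow> act (F x) (normal_form x) = x"
  by (simp add: normal_form_def act_act SO3_mult_transpose frame_in_SO3)

lemma normal_form_act:
  assumes "A \<in> SO3" "x \<in> S"
  shows "normal_form (act A x) = normal_form x"
proof -
  have "normal_form (act A x) = act (transpose (F x) ** (transpose A ** A)) x"
    using assms by (simp add: normal_form_def frame_act act_act matrix_transpose_mul matrix_mul_assoc)
  then show ?thesis
    using assms(1) by (simp add: SO3_transpose_mult normal_form_def)
qed

lemma normal_form_eq_iff_orbit_eq: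
  "x \<in> S \<Longrightarrow> y \<in> S \<Longrightarrow> normal_form x = normal_form y \<longleftrightarrow> orbit x = orbit y"
  by (metis orbit_eq_iff normal_form_act orbit_normal_form)

definition orbit_section :: "((real^3)^'v) set \<Rightarrow> (real^3)^'v" where
  "orbit_section b = normal_form (SOME x. x \<in> S \<and> orbit x = b)"

lemma orbit_section_orbit:
  assumes "x \<in> S"
  shows "orbit_section (orbit x) = normal_form x"
proof -
  have "\<exists>y. y \<in> S \<and> orbit y = orbit x" using assms by blast
  then have "(SOME y. y \<in> S \<and> orbit y = orbit x) \<in> S \<and> orbit (SOME y. y \<in> S \<and> orbit y = orbit x) = orbit x"
    by (rule someI_ex)
  then show ?thesis
    using assms by (simp add: orbit_section_def normal_form_eq_iff_orbit_eq)
qed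

lemma continuous_map_orbit_section:
  "continuous_map (orbit_space_topology S) (top_of_set S) orbit_section"
proof (rule continuous_compose_quotient_map[OF quotient_map_orbit])
  have "continuous_on S normal_form"
    unfolding normal_form_def by (intro continuous_intros continuous_frame)
  then have "continuous_map (top_of_set S) (top_of_set S) normal_form"
    by (auto simp: continuous_map_in_subtopology normal_form_in)
  then show "continuous_map (top_of_set S) (top_of_set S) (orbit_section \<circ> orbit)"
    by (rule continuous_map_eq) (simp add: orbit_section_orbit)
qed

lemma homeomorphic_map_trivialisation:
  "homeomorphic_map (top_of_set S) (prod_topology (orbit_space_topology S) (top_of_set SO3))
     (\<lambda>x. (orbit x, F x))"
proof -
  let ?B = "orbit_space_topology S"
  have "homeomorphic_maps (top_of_set S) (prod_topology ?B (top_of_set SO3))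
          (\<lambda>x. (orbit x, F x)) (\<lambda>(b, A). act A (orbit_section b))"
    unfolding homeomorphic_maps_def
  proof (intro conjI ballI)
    show "continuous_map (top_of_set S) (prod_topology ?B (top_of_set SO3)) (\<lambda>x. (orbit x, F x))"
      using quotient_imp_continuous_map[OF quotient_map_orbit] continuous_frame frame_in_SO3
      by (auto simp: continuous_map_paired continuous_map_in_subtopology)
    have "continuous_map (prod_topology ?B (top_of_set SO3)) (top_of_set S) (orbit_section \<circ> fst)"
      by (rule continuous_map_compose[OF continuous_map_fst continuous_map_orbit_section])
    then have "continuous_map (prod_topology ?B (top_of_set SO3)) (prod_topology (top_of_set SO3) (top_of_set S))
            (\<lambda>p. (snd p, (orbit_section \<circ> fst) p))"
      unfolding continuous_map_paired using continuous_map_snd by blast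
    then show "continuous_map (prod_topology ?B (top_of_set SO3)) (top_of_set S) (\<lambda>(b, A). act A (orbit_section b))"
      using continuous_map_compose[OF _ continuous_map_act[OF act_closed]]
      by (fastforce simp: o_def case_prod_beta')
  next
    fix x assume "x \<in> topspace (top_of_set S)"
    then show "(\<lambda>(b, A). act A (orbit_section b)) (orbit x, F x) = x"
      by (simp add: orbit_section_orbit act_frame_normal_form)
  next
    fix p assume "p \<in> topspace (prod_topology ?B (top_of_set SO3))"
    then obtain x A where p: "p = (orbit x, A)" "x \<in> S" "A \<in> SO3"
      by (auto simp: topspace_orbit_space_topology)
    then show "(\<lambda>x. (orbit x, F x)) ((\<lambda>(b, A). act A (orbit_section b)) p) = p"
      by (simp add: orbit_section_orbit orbit_act orbit_normal_form frame_act normal_form_in frame_normal_form)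
  qed
  then show ?thesis using homeomorphic_map_maps by blast
qed

lemma homeomorphic_map_graph_act:
  "homeomorphic_map (prod_topology (top_of_set S) (top_of_set SO3))
     (subtopology (prod_topology (top_of_set S) (top_of_set S)) ((\<lambda>(x, A). (x, act A x)) ` (S \<times> SO3)))
     (\<lambda>(x, A). (x, act A x))"
proof -
  let ?f = "\<lambda>(x, A). (x, act A x)"
  let ?T = "?f ` (S \<times> SO3)"
  let ?g = "\<lambda>(x, y). (x, F y ** transpose (F x))"
  have "?T \<subseteq> S \<times> S" using act_closed by auto
  then have T: "subtopology (top_of_set (S \<times> S)) ?T = top_of_set ?T"
    by (simp add: subtopology_subtopology Int_absorb1)
  have "homeomorphic_maps (top_of_set (S \<times> SO3)) (top_of_set ?T) ?f ?g"
    unfolding homeomorphic_maps_def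
  proof (intro conjI ballI)
    have "continuous_on (S \<times> SO3) (\<lambda>p. (fst p, act (snd p) (fst p)))"
      by (intro continuous_intros)
    then show "continuous_map (top_of_set (S \<times> SO3)) (top_of_set ?T) ?f"
      by (auto simp: continuous_map_in_subtopology case_prod_beta')
    have "continuous_on ?T (\<lambda>p. (fst p, F (snd p) ** transpose (F (fst p))))"
      using \<open>?T \<subseteq> S \<times> S\<close>
      by (intro continuous_intros continuous_on_compose2[OF continuous_frame]) auto
    moreover have "?g ` ?T \<subseteq> S \<times> SO3"
      using frame_in_SO3 frame_act by (auto simp: matrix_mul_assoc[symmetric] SO3_mult_transpose)
    ultimately show "continuous_map (top_of_set ?T) (top_of_set (S \<times> SO3)) ?g"
      by (auto simp: continuous_map_in_subtopology case_prod_beta')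
  next
    fix p assume "p \<in> topspace (top_of_set (S \<times> SO3))"
    then show "?g (?f p) = p"
      using frame_in_SO3 frame_act by (auto simp: matrix_mul_assoc[symmetric] SO3_mult_transpose)
  next
    fix p assume "p \<in> topspace (top_of_set ?T)"
    then show "?f (?g p) = p"
      using frame_in_SO3 frame_act by (auto simp: matrix_mul_assoc[symmetric] SO3_mult_transpose act_act)
  qed
  then show ?thesis
    using T homeomorphic_map_maps by (auto simp: prod_topology_subtopology_eu)
qed

lemma trivial_bundle:
  "trivial_SO3_bundle (top_of_set S) act (orbit_space_topology S) orbit"
  unfolding trivial_SO3_bundle_def
  using homeomorphic_map_trivialisation
  by (intro exI[of _ "\<lambda>x. (orbit x, F x)"]) (auto simp: orbit_act frame_act)

lemma principal_bundle:
  "principal_SO3_bundle (top_of_set S) act (orbit_space_topology S) orbit"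
  unfolding principal_SO3_bundle_def
proof (intro conjI)
  let ?X = "top_of_set S" and ?B = "orbit_space_topology S"
  have "{x \<in> topspace ?X. orbit x \<in> topspace ?B} = topspace ?X"
    by (auto simp: topspace_orbit_space_topology)
  then show "\<forall>b\<in>topspace ?B. \<exists>U. openin ?B U \<and> b \<in> U \<and>
      (\<exists>h. homeomorphic_map (subtopology ?X {x \<in> topspace ?X. orbit x \<in> U})
               (prod_topology (subtopology ?B U) (top_of_set SO3)) h \<and>
           (\<forall>x \<in> topspace ?X. orbit x \<in> U \<longrightarrow>
               fst (h x) = orbit x \<and> (\<forall>A\<in>SO3. h (act A x) = (orbit x, A ** snd (h x)))))"
    using trivial_bundle unfolding trivial_SO3_bundle_def
    by (intro ballI exI[of _ "topspace ?B"]) (auto simp: subtopology_subtopology)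
qed (use act_closed continuous_map_act[OF act_closed] quotient_map_orbit
        homeomorphic_map_graph_act in \<open>auto simp: act_act orbit_eq_iff\<close>)

lemma exists_continuous_section:
  "\<exists>s. continuous_map (orbit_space_topology S) (top_of_set S) s \<and>
     (\<forall>b \<in> topspace (orbit_space_topology S). orbit (s b) = b)"
  using continuous_map_orbit_section
  by (auto simp: topspace_orbit_space_topology orbit_section_orbit orbit_normal_form)

end

lemma is_configuration_act:
  assumes A: "orthogonal_matrix A" and x: "is_configuration E L Th x \<gamma>"
  shows "is_configuration E L Th (act A x) (\<lambda>v w t. A *v \<gamma> v w t)"
  unfolding is_configuration_def
proof (intro conjI)
  note config = x[unfolded is_configuration_def]
  note cancel = orthogonal_matrix_mult_vector_cancel[OF A]
  show "\<forall>(v, w)\<in>E.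
     continuous_on {0..L (v, w)} (\<lambda>t. A *v \<gamma> v w t) \<and>
     (\<forall>s\<in>{0..L (v, w)}. \<forall>t\<in>{0..L (v, w)}. dist (A *v \<gamma> v w s) (A *v \<gamma> v w t) = \<bar>s - t\<bar>) \<and>
     A *v \<gamma> v w 0 = act A x $ v \<and> A *v \<gamma> v w (L (v, w)) = act A x $ w \<and>
     (\<forall>t\<in>{0..L (v, w)}. A *v \<gamma> w v t = A *v \<gamma> v w (L (v, w) - t))"
    using config by (auto simp: orthogonal_matrix_dist[OF A] intro: continuous_intros)
  show "inj (\<lambda>v. act A x $ v)"
    using config by (simp add: inj_def cancel)
  show "\<forall>(v, w)\<in>E. \<forall>t\<in>{0<..<L (v, w)}. \<forall>u. A *v \<gamma> v w t \<noteq> act A x $ u"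
    using config by (simp add: cancel)
  show "\<forall>(v, w)\<in>E. \<forall>(v', w')\<in>E. \<forall>s\<in>{0<..<L (v, w)}. \<forall>t\<in>{0<..<L (v', w')}.
      A *v \<gamma> v w s = A *v \<gamma> v' w' t \<longrightarrow>
        (v = v' \<and> w = w' \<and> s = t) \<or> (v = w' \<and> w = v' \<and> s = L (v', w') - t)"
    using config by (simp only: cancel) blast
  show "\<forall>(v, w1, w2)\<in>E2 E. vec_angle (act A x $ w1 - act A x $ v) (act A x $ w2 - act A x $ v) = Th (v, w1, w2)"
    using config
    by (simp add: matrix_vector_mult_diff_distrib[symmetric] vec_angle_orthogonal_matrix[OF A])
qed

lemma act_in_CP:
  assumes A: "A \<in> SO3" and x: "x \<in> CP E c L Th"
  shows "act A x \<in> CP E c L Th"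
proof -
  obtain \<gamma> where \<gamma>: "is_configuration E L Th x \<gamma>" and centre: "(\<Sum>v\<in>UNIV. real (c v) *\<^sub>R x $ v) = 0"
    using x by (auto simp: CP_def)
  have "(\<Sum>v\<in>UNIV. real (c v) *\<^sub>R act A x $ v) = A *v (\<Sum>v\<in>UNIV. real (c v) *\<^sub>R x $ v)"
    by (simp add: matrix_vector_mult_scaleR linear_sum[OF matrix_vector_mul_linear])
  with centre have "(\<Sum>v\<in>UNIV. real (c v) *\<^sub>R act A x $ v) = 0" by simp
  moreover have "orthogonal_matrix A" using A by (simp add: SO3_def)
  ultimately show ?thesis
    using is_configuration_act[OF _ \<gamma>] by (auto simp: CP_def)
qed

lemma cross3_bond_vectors_neq_0:
  assumes "molecular_graph E L Th" "(v, w1, w2) \<in> E2 E" "Th (v, w1, w2) \<noteq> pi"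
    and "x \<in> CP E c L Th"
  shows "cross3 (x $ w1 - x $ v) (x $ w2 - x $ v) \<noteq> 0"
proof (rule cross3_neq_0_if_vec_angle)
  obtain \<gamma> where "is_configuration E L Th x \<gamma>"
    using assms(4) by (auto simp: CP_def)
  then have inj: "inj (($) x)"
    and angle: "vec_angle (x $ w1 - x $ v) (x $ w2 - x $ v) = Th (v, w1, w2)"
    using assms(2) unfolding is_configuration_def by fast+
  have "v \<noteq> w1" "v \<noteq> w2"
    using assms(1,2) by (auto simp: molecular_graph_def E2_def)
  with inj show "x $ w1 - x $ v \<noteq> 0" "x $ w2 - x $ v \<noteq> 0"
    by (auto simp: inj_def)
  have "0 < Th (v, w1, w2)" "Th (v, w1, w2) \<le> pi"
    using assms(1,2) by (fastforce simp: molecular_graph_def)+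
  with angle assms(3) show "vec_angle (x $ w1 - x $ v) (x $ w2 - x $ v) \<notin> {0, pi}"
    by auto
qed

theorem mainTheorem3:
  fixes E :: "('v::finite \<times> 'v) set"
    and c :: "'v \<Rightarrow> nat"
    and L :: "'v \<times> 'v \<Rightarrow> real"
    and Th :: "'v \<times> 'v \<times> 'v \<Rightarrow> real"
  assumes "molecular_graph E L Th"
    and "\<exists>(v, w1, w2) \<in> E2 E. Th (v, w1, w2) \<noteq> pi"
  shows "principal_SO3_bundle (top_of_set (CP E c L Th)) act
           (orbit_space_topology (CP E c L Th)) orbit
       \<and> trivial_SO3_bundle (top_of_set (CP E c L Th)) act
           (orbit_space_topology (CP E c L Th)) orbit
       \<and> (\<exists>s. continuous_map (orbit_space_topology (CP E c L Th)) (top_of_set (CP E c L Th)) s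
              \<and> (\<forall>b \<in> topspace (orbit_space_topology (CP E c L Th)). orbit (s b) = b))"
proof -
  obtain v w1 w2 where bond: "(v, w1, w2) \<in> E2 E" "Th (v, w1, w2) \<noteq> pi"
    using assms(2) by auto
  note nondegenerate = cross3_bond_vectors_neq_0[OF assms(1) bond]
  interpret equivariant_frame "CP E c L Th" "\<lambda>x. frame (x $ w1 - x $ v) (x $ w2 - x $ v)"
  proof
    show "act A x \<in> CP E c L Th" if "A \<in> SO3" "x \<in> CP E c L Th" for A x
      using that by (rule act_in_CP)
    show "continuous_on (CP E c L Th) (\<lambda>x. frame (x $ w1 - x $ v) (x $ w2 - x $ v))"
      using nondegenerate by (intro continuous_on_frame continuous_intros)
    show "frame (x $ w1 - x $ v) (x $ w2 - x $ v) \<in> SO3" if "x \<in> CP E c L Th" for x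
      using nondegenerate[OF that] by (simp add: SO3_iff_rotation_matrix rotation_matrix_frame)
    show "frame (act A x $ w1 - act A x $ v) (act A x $ w2 - act A x $ v)
            = A ** frame (x $ w1 - x $ v) (x $ w2 - x $ v)" if "A \<in> SO3" for A x
      using that
      by (simp add: SO3_iff_rotation_matrix frame_rotation_matrix matrix_vector_mult_diff_distrib[symmetric])
  qed
  show ?thesis
    using principal_bundle trivial_bundle exists_continuous_section by blast
qed

end
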